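(* Let $P_c$ be the program defined in the context, for an arbitrary ordering $\alpha$ of $X$. For every supported model $M$ of $P_c$, the digraph on $X$ with arc set $\{(p,q):\mathrm{dep}(p,q)\in M\}$ contains no directed cycle, including cycles of length $1$.
   Context: Delete-relaxed planning. Let $X$ be a finite set of atomic propositions, $A^+$ a finite set of actions, and $G\subseteq X$. Each action $\vec a\in A^+$ has $pre(\vec a),add(\vec a)\subseteq X$; there are no delete effects and the initial state is $\emptyset$. For each action $\vec a$ there is an action atom $a$. Further atoms are: - $\mathrm{dep}(p,q)$ for $p,q\in X$; - $\mathrm{ws}(a,p)$ for actions $\vec a$ and $p\in X$; - a special atom $f$. All these atoms are pairwise distinct and distinct from $X$. Logic programs. A normal rule has the form $h\leftarrow b_1,\dots,b_n,\mathtt{not}\,c_1,\dots,\mathtt{not}\,c_m$, and a choice rule has the form $\{h\}\leftarrow(\text{same body})$. An interpretation $I$ satisfies a body if all $b_i\in I$ and no $c_j\in I$. $I$ is a model if every normal rule whose body $I$ satisfies has its head in $I$. The supporting rules of $P$ w.r.t. $I$ are: - the normal rules whose body $I$ satisfies; - the choice rules whose body $I$ satisfies and whose head is in $I$. A model $I$ of $P$ is supported if $I$ is exactly the set of heads of its supporting rules. Vertex elimination. For a digraph $(V',E')$ and vertex $v$: - the fill-in is $F(v)=\{(x,y):(x,v),(v,y)\in E',x\ne y\}$; - the $v$-elimination graph deletes $v$ together with its incident arcs and adds $F(v)$. For an ordering $\alpha:\{1,\dots,n\}\to V$ of a digraph $\mathcal{G}$ with $n$ vertices, set $\mathcal{G}_0=\mathcal{G}$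 and let $\mathcal{G}_i$ be the $\alpha(i)$-elimination graph of $\mathcal{G}_{i-1}$ for $i=1,\dots,n-1$. Let $F_{i-1}(\alpha(i))$ be the fill-in of $\alpha(i)$ in $\mathcal{G}_{i-1}$. The vertex elimination graph is $\mathcal{G}^*_\alpha=(V,E^* )$, where $E^*$ is the union of the original arcs and all $F_{i-1}(\alpha(i))$. Program $P_c$. Let $E=\{(p,q)\in X\times X:\exists \vec a\in A^+,\ p\in add(\vec a),\ q\in pre(\vec a)\}$ and $\mathcal{G}=(X,E)$. Let $n=|X|$, fix an ordering $\alpha$ of $X$, and let $E^*$ be the arc set of $\mathcal{G}^*_\alpha$. $P_c$ consists of: - (C1) $\{\mathrm{dep}(p,q)\}\leftarrow q$ for each $(p,q)\in E$; - (C2) $\{\mathrm{ws}(a,p)\}\leftarrow \mathrm{dep}(p,q_1),\dots,\mathrm{dep}(p,q_k)$ for each $\vec a\in A^+$ and $p\in add(\vec a)$, where $pre(\vec a)=\{q_1,\dots,q_k\}$; - (C3) $p\leftarrow \mathrm{ws}(a,p)$ and $a\leftarrow\mathrm{ws}(a,p)$ for each $\vec a\in A^+$ and $p\in add(\vec a)$; - (C4) $g\leftarrow\mathtt{not}\,g$ for each $g\in G$; - (C5) $\mathrm{dep}(p,q)\leftarrow\mathrm{dep}(p,\alpha(i)),\mathrm{dep}(\alpha(i),q)$ for each $i\in\{1,\dots,n-1\}$ and each $(p,q)\in F_{i-1}(\alpha(i))$; - (C6) $f\leftarrow \mathrm{dep}(p,q),\mathrm{dep}(q,p),\mathtt{not}\,f$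 for all $p,q\in X$ (possibly $p=q$) with $(p,q)\in E^*$ and $(q,p)\in E^*$. *)

theory Defs
  imports Main
begin

datatype ('x, 'a) atom =
    Prop 'x
  | Act 'a
  | Dep 'x 'x
  | WS 'a 'x
  | FAtom

datatype 'at rule =
    Normal 'at "'at set" "'at set"
  | Choice 'at "'at set" "'at set"

definition sat_body :: "'at set \<Rightarrow> 'at set \<Rightarrow> 'at set \<Rightarrow> bool" where
  "sat_body I pos neg \<longleftrightarrow> pos \<subseteq> I \<and> neg \<inter> I = {}"

definition is_model :: "'at rule set \<Rightarrow> 'at set \<Rightarrow> bool" where
  "is_model P I \<longleftrightarrow> (\<forall>h pos neg. Normal h pos neg \<in> P \<longrightarrow> sat_body I pos neg \<longrightarrow> h \<in> I)"

definition supporting_rules :: "'at rule set \<Rightarrow> 'at set \<Rightarrow> 'at rule set" where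
  "supporting_rules P I =
     {r \<in> P. (\<exists>h pos neg. r = Normal h pos neg \<and> sat_body I pos neg)
           \<or> (\<exists>h pos neg. r = Choice h pos neg \<and> sat_body I pos neg \<and> h \<in> I)}"

fun rule_head :: "'at rule \<Rightarrow> 'at" where
  "rule_head (Normal h _ _) = h"
| "rule_head (Choice h _ _) = h"

definition supported_model :: "'at rule set \<Rightarrow> 'at set \<Rightarrow> bool" where
  "supported_model P I \<longleftrightarrow> is_model P I \<and> I = rule_head ` supporting_rules P I"

definition fill_in :: "('v \<times> 'v) set \<Rightarrow> 'v \<Rightarrow> ('v \<times> 'v) set" where
  "fill_in E' v = {(x, y). (x, v) \<in> E' \<and> (v, y) \<in> E' \<and> x \<noteq> y}"

definition elim_arcs :: "('v \<times> 'v) set \<Rightarrow> 'v \<Rightarrow> ('v \<times> 'v) set" where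
  "elim_arcs E' v = {(x, y). (x, y) \<in> E' \<union> fill_in E' v \<and> x \<noteq> v \<and> y \<noteq> v}"

text \<open>The ordering alpha is a list ord with alpha(i) = ord ! (i-1).
  elim_seq E ord k is the arc set of G_k.\<close>
definition elim_seq :: "('v \<times> 'v) set \<Rightarrow> 'v list \<Rightarrow> nat \<Rightarrow> ('v \<times> 'v) set" where
  "elim_seq E ord k = foldl elim_arcs E (take k ord)"

text \<open>Fill-in F_{k}(alpha(k+1)) of alpha(k+1) in G_k, for k = 0..n-2.\<close>
definition step_fill :: "('v \<times> 'v) set \<Rightarrow> 'v list \<Rightarrow> nat \<Rightarrow> ('v \<times> 'v) set" where
  "step_fill E ord k = fill_in (elim_seq E ord k) (ord ! k)"

definition elim_graph_arcs :: "('v \<times> 'v) set \<Rightarrow> 'v list \<Rightarrow> ('v \<times> 'v) set" where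
  "elim_graph_arcs E ord = E \<union> (\<Union>k < length ord - 1. step_fill E ord k)"

definition dep_graph :: "'a set \<Rightarrow> ('a \<Rightarrow> 'x set) \<Rightarrow> ('a \<Rightarrow> 'x set) \<Rightarrow> ('x \<times> 'x) set" where
  "dep_graph A pre add = {(p, q). \<exists>a\<in>A. p \<in> add a \<and> q \<in> pre a}"

definition Pc :: "'x set \<Rightarrow> 'a set \<Rightarrow> ('a \<Rightarrow> 'x set) \<Rightarrow> ('a \<Rightarrow> 'x set) \<Rightarrow> 'x set
                   \<Rightarrow> 'x list \<Rightarrow> ('x, 'a) atom rule set" where
  "Pc X A pre add G ord =
    (let E = dep_graph A pre add; Es = elim_graph_arcs E ord; n = length ord in
      {Choice (Dep p q) {Prop q} {} | p q. (p, q) \<in> E}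
    \<union> {Choice (WS a p) (Dep p ` pre a) {} | a p. a \<in> A \<and> p \<in> add a}
    \<union> {Normal (Prop p) {WS a p} {} | a p. a \<in> A \<and> p \<in> add a}
    \<union> {Normal (Act a) {WS a p} {} | a p. a \<in> A \<and> p \<in> add a}
    \<union> {Normal (Prop g) {} {Prop g} | g. g \<in> G}
    \<union> {Normal (Dep p q) {Dep p (ord ! k), Dep (ord ! k) q} {} | k p q.
          k < n - 1 \<and> (p, q) \<in> step_fill E ord k}
    \<union> {Normal FAtom {Dep p q, Dep q p} {FAtom} | p q.
          p \<in> X \<and> q \<in> X \<and> (p, q) \<in> Es \<and> (q, p) \<in> Es})"

end

theory Submission
  imports Defs
begin

text \<open>Write \<open>R\<close> for the arcs \<open>p \<rightarrow> q\<close> with \<open>dep(p,q) \<in> M\<close>. The atom \<open>f\<close> has no supporting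
  rule, so \<open>f \<notin> M\<close>; every \<open>dep\<close> atom of \<open>M\<close> is supported by (C1) or (C5), so \<open>R\<close> lies in
  the vertex elimination graph \<open>E\<^sup>*\<close>, and then (C6) rules out 2-cycles and loops in \<open>R\<close>.
  If \<open>x \<rightarrow> v \<rightarrow> y\<close> in \<open>R\<close> with \<open>v\<close> eliminated before \<open>x\<close> and \<open>y\<close>, both arcs are still
  present when \<open>v\<close> is eliminated, so \<open>(x,y)\<close> is fill-in and (C5) forces \<open>dep(x,y) \<in> M\<close>.
  Shortcutting a shortest cycle of \<open>R\<close> at its earliest eliminated vertex would produce a
  shorter one.\<close>

lemma successively_snoc:
  "successively P (xs @ [y]) \<longleftrightarrow> successively P xs \<and> (xs = [] \<or> P (last xs) y)"
  by (simp add: successively_append_iff)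

definition closed_walk :: "('v \<times> 'v) set \<Rightarrow> 'v list \<Rightarrow> bool" where
  "closed_walk R c \<longleftrightarrow> c \<noteq> [] \<and> successively (\<lambda>x y. (x, y) \<in> R) (c @ [hd c])"

lemma closed_walk_rotate:
  assumes "closed_walk R (xs @ ys)" shows "closed_walk R (ys @ xs)"
proof (cases "xs = [] \<or> ys = []")
  case True
  then show ?thesis using assms by auto
next
  case False
  then have "hd (xs @ ys) = hd xs" "hd (ys @ xs) = hd ys" by auto
  with assms False show ?thesis
    unfolding closed_walk_def
    by (auto simp: successively_append_iff successively_snoc successively_Cons)
qed

lemma trancl_imp_walk:
  assumes "(a, b) \<in> R\<^sup>+"
  shows "\<exists>w. successively (\<lambda>x y. (x, y) \<in> R) (a # w @ [b])"
  using assms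
proof (induction rule: trancl_induct)
  case (base b)
  then show ?case by (intro exI[of _ "[]"]) simp
next
  case (step b c)
  then obtain w where "successively (\<lambda>x y. (x, y) \<in> R) (a # w @ [b])" by blast
  with step.hyps(2) have "successively (\<lambda>x y. (x, y) \<in> R) ((a # w @ [b]) @ [c])"
    unfolding successively_snoc by simp
  then show ?case by (intro exI[of _ "w @ [b]"]) simp
qed

lemma acyclicI_closed_walk:
  assumes "\<And>c. \<not> closed_walk R c" shows "acyclic R"
  unfolding acyclic_def
proof (intro allI notI)
  fix p assume "(p, p) \<in> R\<^sup>+"
  then obtain w where "successively (\<lambda>x y. (x, y) \<in> R) (p # w @ [p])"
    using trancl_imp_walk by metis
  then have "closed_walk R (p # w)" unfolding closed_walk_def by simp
  with assms show False by blast
qed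

lemma closed_walk_least_first:
  fixes rank :: "'v \<Rightarrow> 'b::linorder"
  assumes "closed_walk R c"
  obtains v ws where "closed_walk R (v # ws)" "length ws < length c" "set (v # ws) = set c"
    "\<And>u. u \<in> set c \<Longrightarrow> rank v \<le> rank u"
proof -
  from assms have "c \<noteq> []" unfolding closed_walk_def by simp
  define v where "v = arg_min_list rank c"
  have "v \<in> set c" using arg_min_list_in[OF \<open>c \<noteq> []\<close>] unfolding v_def .
  then obtain xs ys where c: "c = xs @ v # ys" by (meson split_list)
  have "closed_walk R (v # ys @ xs)" using closed_walk_rotate[of R xs "v # ys"] assms c by simp
  moreover have "rank v \<le> rank u" if "u \<in> set c" for u
    using that unfolding v_def f_arg_min_list_f[OF \<open>c \<noteq> []\<close>] by simp
  ultimately show thesis using that[of v "ys @ xs"] c by auto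
qed

context
  fixes R :: "('v \<times> 'v) set" and rank :: "'v \<Rightarrow> nat"
  assumes inj: "inj_on rank (Field R)"
    and asym: "\<And>x y. (x, y) \<in> R \<Longrightarrow> (y, x) \<notin> R"
    and shortcut: "\<And>x v y. (x, v) \<in> R \<Longrightarrow> (v, y) \<in> R \<Longrightarrow> x \<noteq> y
                     \<Longrightarrow> rank v < rank x \<Longrightarrow> rank v < rank y \<Longrightarrow> (x, y) \<in> R"
begin

text \<open>Rotate the walk so that its vertex \<open>v\<close> of least rank comes first; its neighbours
  \<open>x \<rightarrow> v \<rightarrow> y\<close> are distinct by asymmetry, so the arc \<open>x \<rightarrow> y\<close> bypasses \<open>v\<close>.\<close>
lemma closed_walk_shorten:
  assumes "closed_walk R c"
  obtains c' where "closed_walk R c'" "length c' < length c"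
proof -
  obtain v ws where "closed_walk R (v # ws)" "length ws < length c" "set (v # ws) = set c"
    and v_min: "\<And>u. u \<in> set c \<Longrightarrow> rank v \<le> rank u"
    using closed_walk_least_first[OF assms] by blast
  then have path: "successively (\<lambda>x y. (x, y) \<in> R) ((v # ws) @ [v])"
    and ws_in_c: "set ws \<subseteq> set c" unfolding closed_walk_def by auto
  show thesis
  proof (cases ws rule: rev_cases)
    case Nil
    then show ?thesis using path asym by auto
  next
    case (snoc ws' x)
    show ?thesis
    proof (cases ws')
      case Nil
      then show ?thesis using path asym snoc by auto
    next
      case (Cons y zs)
      from path have "successively (\<lambda>x y. (x, y) \<in> R) (v # y # zs @ [x])" and x_v: "(x, v) \<in> R"
        unfolding snoc Cons successively_snoc by simp_all
      then have v_y: "(v, y) \<in> R" and rest: "successively (\<lambda>x y. (x, y) \<in> R) (y # zs @ [x])"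
        by simp_all
      have "x \<in> set c" "y \<in> set c" using ws_in_c snoc Cons by auto
      have "x \<noteq> v" "y \<noteq> v" "x \<noteq> y" using asym x_v v_y by auto
      moreover have "x \<in> Field R" "y \<in> Field R" "v \<in> Field R"
        using x_v v_y by (auto intro: FieldI1 FieldI2)
      ultimately have "rank x \<noteq> rank v" "rank y \<noteq> rank v"
        using inj_onD[OF inj] by blast+
      then have "rank v < rank x" "rank v < rank y"
        using v_min[OF \<open>x \<in> set c\<close>] v_min[OF \<open>y \<in> set c\<close>] by auto
      then have "(x, y) \<in> R" using shortcut x_v v_y \<open>x \<noteq> y\<close> by blast
      with rest have "successively (\<lambda>x y. (x, y) \<in> R) ((y # zs @ [x]) @ [y])"
        unfolding successively_snoc by simp
      then have "closed_walk R (y # zs @ [x])" unfolding closed_walk_def by simp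
      moreover have "length (y # zs @ [x]) < length c"
        using \<open>length ws < length c\<close> snoc Cons by simp
      ultimately show ?thesis using that by blast
    qed
  qed
qed

lemma acyclic_if_shortcut_closed: "acyclic R"
proof (rule acyclicI_closed_walk)
  show "\<not> closed_walk R c" for c
  proof (induction "length c" arbitrary: c rule: less_induct)
    case less
    then show ?case using closed_walk_shorten by metis
  qed
qed

end

lemma nth_in_set_drop_iff:
  assumes "distinct xs" and "i < length xs"
  shows "xs ! i \<in> set (drop j xs) \<longleftrightarrow> j \<le> i"
proof
  assume "xs ! i \<in> set (drop j xs)"
  then obtain l where "l < length (drop j xs)" "drop j xs ! l = xs ! i"
    by (metis in_set_conv_nth)
  then have "j + l = i" using assms nth_eq_iff_index_eq by fastforce
  then show "j \<le> i" by simp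
next
  assume "j \<le> i"
  then show "xs ! i \<in> set (drop j xs)"
    using assms(2) nth_mem[of "i - j" "drop j xs"] by simp
qed

definition elim_rank :: "'v list \<Rightarrow> 'v \<Rightarrow> nat" where
  "elim_rank ord = inv_into {..<length ord} (nth ord)"

lemma elim_rank:
  assumes "x \<in> set ord"
  shows "elim_rank ord x < length ord" and "ord ! elim_rank ord x = x"
  using assms inv_into_into[of x "nth ord" "{..<length ord}"] f_inv_into_f[of x "nth ord"]
  unfolding elim_rank_def by (auto simp: set_conv_nth)

lemma inj_on_elim_rank: "inj_on (elim_rank ord) (set ord)"
  by (rule inj_onI) (metis elim_rank(2))

lemma in_set_drop_iff_elim_rank:
  assumes "distinct ord" and "x \<in> set ord"
  shows "x \<in> set (drop k ord) \<longleftrightarrow> k \<le> elim_rank ord x"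
  using nth_in_set_drop_iff[OF assms(1) elim_rank(1)[OF assms(2)]] elim_rank(2)[OF assms(2)]
  by simp

lemma elim_seq_0 [simp]: "elim_seq E ord 0 = E"
  unfolding elim_seq_def by simp

lemma elim_seq_Suc:
  "j < length ord \<Longrightarrow> elim_seq E ord (Suc j) = elim_arcs (elim_seq E ord j) (ord ! j)"
  unfolding elim_seq_def by (simp add: take_Suc_conv_app_nth)

lemma elim_seq_subset_remaining:
  assumes "E \<subseteq> set ord \<times> set ord" and "k \<le> length ord"
  shows "elim_seq E ord k \<subseteq> set (drop k ord) \<times> set (drop k ord)"
  using assms(2)
proof (induction k)
  case 0
  then show ?case using assms(1) by simp
next
  case (Suc k)
  then have k: "k < length ord" by simp
  have "set (drop k ord) = insert (ord ! k) (set (drop (Suc k) ord))"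
    by (metis Cons_nth_drop_Suc[OF k] list.simps(15))
  with Suc k show ?case
    unfolding elim_seq_Suc[OF k] elim_arcs_def fill_in_def by auto
qed

lemma elim_seq_keeps_arc:
  assumes "distinct ord" and "i \<le> k" and "k \<le> length ord"
    and "(a, b) \<in> elim_seq E ord i"
    and "a \<in> set (drop k ord)" and "b \<in> set (drop k ord)"
  shows "(a, b) \<in> elim_seq E ord k"
  using assms(2-6)
proof (induction k)
  case 0
  then show ?case by simp
next
  case (Suc k)
  show ?case
  proof (cases "i = Suc k")
    case True
    then show ?thesis using Suc.prems by simp
  next
    case False
    then have k: "k < length ord" "i \<le> k" using Suc.prems by auto
    have "set (drop (Suc k) ord) \<subseteq> set (drop k ord)" by (simp add: set_drop_subset_set_drop)
    then have "(a, b) \<in> elim_seq E ord k" using Suc k by auto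
    moreover have "ord ! k \<notin> set (drop (Suc k) ord)"
      using nth_in_set_drop_iff[OF assms(1) k(1)] by simp
    ultimately show ?thesis
      using Suc.prems unfolding elim_seq_Suc[OF k(1)] elim_arcs_def by auto
  qed
qed

text \<open>Fill-in arcs of later steps cannot have \<open>ord ! k\<close> as an endpoint, since it is already
  eliminated by then.\<close>
lemma elim_graph_arc_in_elim_seq:
  assumes E: "E \<subseteq> set ord \<times> set ord" and "distinct ord" and k: "k < length ord"
    and ab: "(a, b) \<in> elim_graph_arcs E ord"
    and a: "a \<in> set (drop k ord)" and b: "b \<in> set (drop k ord)"
    and "a = ord ! k \<or> b = ord ! k"
  shows "(a, b) \<in> elim_seq E ord k"
proof -
  from ab consider (arc) "(a, b) \<in> E" | (fill) j where "j < length ord - 1" "(a, b) \<in> step_fill E ord j"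
    unfolding elim_graph_arcs_def by auto
  then show ?thesis
  proof cases
    case arc
    then show ?thesis using elim_seq_keeps_arc[of ord 0 k] assms by simp
  next
    case (fill j)
    then have j: "j < length ord" by simp
    consider (before) "j < k" | (at) "j = k" | (after) "k < j" by linarith
    then show ?thesis
    proof cases
      case before
      have "ord ! j \<notin> set (drop k ord)"
        using before nth_in_set_drop_iff[OF \<open>distinct ord\<close> j] by simp
      then have "(a, b) \<in> elim_seq E ord (Suc j)"
        using fill a b unfolding elim_seq_Suc[OF j] step_fill_def elim_arcs_def by auto
      then show ?thesis using elim_seq_keeps_arc[of ord "Suc j" k] before assms by simp
    next
      case at
      then show ?thesis
        using \<open>(a, b) \<in> step_fill E ord j\<close> assms(7) unfolding step_fill_def fill_in_def by auto
    next
      case after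
      have "step_fill E ord j \<subseteq> set (drop j ord) \<times> set (drop j ord)"
        using elim_seq_subset_remaining[OF E, of j] j unfolding step_fill_def fill_in_def by auto
      moreover have "ord ! k \<notin> set (drop j ord)"
        using after nth_in_set_drop_iff[OF \<open>distinct ord\<close> k] by simp
      ultimately show ?thesis using fill assms(7) a b by auto
    qed
  qed
qed

lemma supported_atomE:
  assumes "supported_model P M" and "h \<in> M"
  obtains (normal) pos neg where "Normal h pos neg \<in> P" "sat_body M pos neg"
    | (choice) pos neg where "Choice h pos neg \<in> P" "sat_body M pos neg"
proof -
  from assms obtain r where "r \<in> supporting_rules P M" "rule_head r = h"
    unfolding supported_model_def by (metis imageE)
  then show ?thesis using that unfolding supporting_rules_def by auto
qed

lemma supported_model_normal_rule:
  assumes "supported_model P M" and "Normal h pos neg \<in> P"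
    and "pos \<subseteq> M" and "neg \<inter> M = {}"
  shows "h \<in> M"
  using assms unfolding supported_model_def is_model_def sat_body_def by blast

lemma Pc_FAtom_rules:
  "Normal FAtom pos neg \<in> Pc X A pre add G ord \<Longrightarrow> neg = {FAtom}"
  "Choice FAtom pos neg \<notin> Pc X A pre add G ord"
  unfolding Pc_def Let_def by auto

lemma Pc_Dep_rules:
  "Choice (Dep p q) pos neg \<in> Pc X A pre add G ord \<Longrightarrow> (p, q) \<in> dep_graph A pre add"
  "Normal (Dep p q) pos neg \<in> Pc X A pre add G ord
     \<Longrightarrow> \<exists>k < length ord - 1. (p, q) \<in> step_fill (dep_graph A pre add) ord k"
  unfolding Pc_def Let_def by auto

lemma Pc_cycle_rule:
  "p \<in> X \<Longrightarrow> q \<in> X \<Longrightarrow> (p, q) \<in> elim_graph_arcs (dep_graph A pre add) ord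
    \<Longrightarrow> (q, p) \<in> elim_graph_arcs (dep_graph A pre add) ord
    \<Longrightarrow> Normal FAtom {Dep p q, Dep q p} {FAtom} \<in> Pc X A pre add G ord"
  unfolding Pc_def Let_def by (rule UnI2) blast

lemma Pc_fill_rule:
  "k < length ord - 1 \<Longrightarrow> (p, q) \<in> step_fill (dep_graph A pre add) ord k
    \<Longrightarrow> Normal (Dep p q) {Dep p (ord ! k), Dep (ord ! k) q} {} \<in> Pc X A pre add G ord"
  unfolding Pc_def Let_def by (rule UnI1, rule UnI2) blast

context
  fixes X :: "'x set" and A :: "'a set" and pre add :: "'a \<Rightarrow> 'x set"
    and G :: "'x set" and ord :: "'x list" and M :: "('x, 'a) atom set"
  assumes supported: "supported_model (Pc X A pre add G ord) M"
begin

lemma Pc_FAtom_not_in_model: "FAtom \<notin> M"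
proof
  assume "FAtom \<in> M"
  with supported show False
  proof (cases rule: supported_atomE)
    case (normal pos neg)
    then show False using \<open>FAtom \<in> M\<close> Pc_FAtom_rules(1) unfolding sat_body_def by blast
  qed (simp add: Pc_FAtom_rules(2))
qed

lemma Pc_Dep_in_elim_graph:
  assumes "Dep p q \<in> M"
  shows "(p, q) \<in> elim_graph_arcs (dep_graph A pre add) ord"
  using supported assms
  by (cases rule: supported_atomE) (auto simp: elim_graph_arcs_def dest: Pc_Dep_rules)

lemma Pc_Dep_asym:
  assumes "p \<in> X" "q \<in> X" "Dep p q \<in> M"
  shows "Dep q p \<notin> M"
proof
  assume "Dep q p \<in> M"
  then have "Normal FAtom {Dep p q, Dep q p} {FAtom} \<in> Pc X A pre add G ord"
    using assms by (intro Pc_cycle_rule Pc_Dep_in_elim_graph)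
  with assms \<open>Dep q p \<in> M\<close> have "FAtom \<in> M"
    using Pc_FAtom_not_in_model by (intro supported_model_normal_rule[OF supported]) auto
  with Pc_FAtom_not_in_model show False by blast
qed

lemma Pc_Dep_shortcut:
  assumes E: "dep_graph A pre add \<subseteq> set ord \<times> set ord" and "distinct ord"
    and "x \<in> set ord" "v \<in> set ord" "y \<in> set ord"
    and xv: "Dep x v \<in> M" and vy: "Dep v y \<in> M" and "x \<noteq> y"
    and "elim_rank ord v < elim_rank ord x" "elim_rank ord v < elim_rank ord y"
  shows "Dep x y \<in> M"
proof -
  define k where "k = elim_rank ord v"
  have k: "k < length ord" and v: "v = ord ! k"
    using elim_rank[OF \<open>v \<in> set ord\<close>] unfolding k_def by simp_all
  have remaining: "x \<in> set (drop k ord)" "v \<in> set (drop k ord)" "y \<in> set (drop k ord)"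
    using assms(3-5,9,10) in_set_drop_iff_elim_rank[OF \<open>distinct ord\<close>] unfolding k_def by auto
  have "(x, v) \<in> elim_seq (dep_graph A pre add) ord k" "(v, y) \<in> elim_seq (dep_graph A pre add) ord k"
    using elim_graph_arc_in_elim_seq[OF E \<open>distinct ord\<close> k Pc_Dep_in_elim_graph] xv vy remaining v
    by simp_all
  then have "(x, y) \<in> step_fill (dep_graph A pre add) ord k"
    unfolding step_fill_def fill_in_def using \<open>x \<noteq> y\<close> v by simp
  moreover have "k < length ord - 1"
    using elim_rank(1)[OF \<open>x \<in> set ord\<close>] assms(9) unfolding k_def by simp
  ultimately have "Normal (Dep x y) {Dep x v, Dep v y} {} \<in> Pc X A pre add G ord"
    unfolding v by (rule Pc_fill_rule[rotated])
  then show ?thesis using xv vy by (intro supported_model_normal_rule[OF supported]) auto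
qed

end

theorem mainTheorem4:
  fixes X :: "'x set" and A :: "'a set" and pre add :: "'a \<Rightarrow> 'x set"
    and G :: "'x set" and ord :: "'x list" and M :: "('x, 'a) atom set"
  assumes "finite X" and "finite A"
    and "\<forall>a\<in>A. pre a \<subseteq> X \<and> add a \<subseteq> X"
    and "G \<subseteq> X"
    and "distinct ord" and "set ord = X"
    and "supported_model (Pc X A pre add G ord) M"
  shows "acyclic {(p, q). p \<in> X \<and> q \<in> X \<and> Dep p q \<in> M}"
proof -
  define R where "R = {(p, q). p \<in> X \<and> q \<in> X \<and> Dep p q \<in> M}"
  have E: "dep_graph A pre add \<subseteq> set ord \<times> set ord"
    using assms(3,6) unfolding dep_graph_def by auto
  have "acyclic R"
  proof (rule acyclic_if_shortcut_closed[where rank = "elim_rank ord"])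
    show "inj_on (elim_rank ord) (Field R)"
      using inj_on_elim_rank by (rule inj_on_subset) (auto simp: R_def Field_def assms(6))
    show "(q, p) \<notin> R" if "(p, q) \<in> R" for p q
      using that Pc_Dep_asym[OF assms(7)] unfolding R_def by blast
    show "(x, y) \<in> R"
      if "(x, v) \<in> R" "(v, y) \<in> R" "x \<noteq> y"
        "elim_rank ord v < elim_rank ord x" "elim_rank ord v < elim_rank ord y" for x v y
      using that Pc_Dep_shortcut[OF assms(7) E assms(5), of x v y] assms(6) unfolding R_def by blast
  qed
  then show ?thesis unfolding R_def .
qed

end
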